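(* Let $n$ be a positive integer and let $G$ be a bipartite graph having two vertices $x$ and $y$ in the same partite set such that $N(x)$ is a proper subset of $N(y)$. If $G[\overline{K_n}]$ admits a local distance antimagic labeling, then $\chi_{ld}(G[\overline{K_{n}}])\geq 3$.
   Context: All graphs are finite, simple and undirected. $N(v)$ denotes the open neighborhood of $v$. For a graph $G=(V,E)$ of order $N$ without isolated vertices, a bijection $f\colon V\to\{1,2,\dots,N\}$ is a local distance antimagic labeling if $w(u)\neq w(v)$ for every edge $uv$, where $w(u)=\sum_{x\in N(u)}f(x)$. $\chi_{ld}(G)$ is the minimum number of distinct weights over all local distance antimagic labelings of $G$. $\overline{K_n}$ is the edgeless graph on $n$ vertices. The lexicographic product $G[H]$ has vertex set $V(G)\times V(H)$, with $(g,h)$ adjacent to $(g',h')$ iff $gg'\in E(G)$, or $g=g'$ and $hh'\in E(H)$. *)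

theory Defs
  imports Main
begin

definition simple_graph :: "'a set \<Rightarrow> ('a \<Rightarrow> 'a \<Rightarrow> bool) \<Rightarrow> bool" where
  "simple_graph V E \<longleftrightarrow> finite V \<and> (\<forall>u v. E u v \<longrightarrow> u \<in> V \<and> v \<in> V)
     \<and> (\<forall>u v. E u v \<longrightarrow> E v u) \<and> (\<forall>v. \<not> E v v)"

definition nbhd :: "'a set \<Rightarrow> ('a \<Rightarrow> 'a \<Rightarrow> bool) \<Rightarrow> 'a \<Rightarrow> 'a set" where
  "nbhd V E v = {u \<in> V. E v u}"

definition bipartite_with :: "'a set \<Rightarrow> ('a \<Rightarrow> 'a \<Rightarrow> bool) \<Rightarrow> 'a set \<Rightarrow> 'a set \<Rightarrow> bool" where
  "bipartite_with V E A B \<longleftrightarrow> A \<union> B = V \<and> A \<inter> B = {}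
     \<and> (\<forall>u v. E u v \<longrightarrow> (u \<in> A \<and> v \<in> B) \<or> (u \<in> B \<and> v \<in> A))"

definition lex_verts :: "'a set \<Rightarrow> 'b set \<Rightarrow> ('a \<times> 'b) set" where
  "lex_verts VG VH = VG \<times> VH"

definition lex_edge :: "('a \<Rightarrow> 'a \<Rightarrow> bool) \<Rightarrow> ('b \<Rightarrow> 'b \<Rightarrow> bool)
    \<Rightarrow> ('a \<times> 'b) \<Rightarrow> ('a \<times> 'b) \<Rightarrow> bool" where
  "lex_edge EG EH p q \<longleftrightarrow> EG (fst p) (fst q) \<or> (fst p = fst q \<and> EH (snd p) (snd q))"

definition edgeless_verts :: "nat \<Rightarrow> nat set" where
  "edgeless_verts n = {1..n}"

definition edgeless_edge :: "nat \<Rightarrow> nat \<Rightarrow> bool" where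
  "edgeless_edge u v \<longleftrightarrow> False"

definition ld_weight :: "'a set \<Rightarrow> ('a \<Rightarrow> 'a \<Rightarrow> bool) \<Rightarrow> ('a \<Rightarrow> nat) \<Rightarrow> 'a \<Rightarrow> nat" where
  "ld_weight V E f u = (\<Sum>x\<in>nbhd V E u. f x)"

definition ld_labeling :: "'a set \<Rightarrow> ('a \<Rightarrow> 'a \<Rightarrow> bool) \<Rightarrow> ('a \<Rightarrow> nat) \<Rightarrow> bool" where
  "ld_labeling V E f \<longleftrightarrow> (\<forall>v\<in>V. nbhd V E v \<noteq> {})
     \<and> bij_betw f V {1..card V}
     \<and> (\<forall>u\<in>V. \<forall>v\<in>V. E u v \<longrightarrow> ld_weight V E f u \<noteq> ld_weight V E f v)"

definition chi_ld :: "'a set \<Rightarrow> ('a \<Rightarrow> 'a \<Rightarrow> bool) \<Rightarrow> nat" where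
  "chi_ld V E = (LEAST k. \<exists>f. ld_labeling V E f \<and> card (ld_weight V E f ` V) = k)"

end

theory Submission
  imports Defs
begin

text \<open>Two vertices with \<open>N(x) \<subset> N(y)\<close> have a common neighbour \<open>u\<close>, since \<open>x\<close> is not
  isolated. Under any local distance antimagic labeling \<open>w(u)\<close> differs from both \<open>w(x)\<close> and
  \<open>w(y)\<close>, while \<open>w(x) < w(y)\<close> because all labels are positive; so there are at least three
  weights. This works in every graph, and in \<open>G[\<overline>K\<^sub>n]\<close> the vertices \<open>(x,1)\<close> and \<open>(y,1)\<close> inherit
  the nesting of neighbourhoods. Bipartiteness only serves to put \<open>x\<close> and \<open>y\<close> into \<open>V(G)\<close>.\<close>

lemma ld_labeling_finite: "ld_labeling V E f \<Longrightarrow> finite V"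
  unfolding ld_labeling_def using bij_betw_finite by blast

lemma ld_labeling_pos: "ld_labeling V E f \<Longrightarrow> v \<in> V \<Longrightarrow> 0 < f v"
  unfolding ld_labeling_def by (auto dest: bij_betw_apply)

lemma chi_ld_attained:
  assumes "\<exists>f. ld_labeling V E f"
  shows "\<exists>f. ld_labeling V E f \<and> card (ld_weight V E f ` V) = chi_ld V E"
  unfolding chi_ld_def
proof (rule LeastI_ex)
  show "\<exists>k f. ld_labeling V E f \<and> card (ld_weight V E f ` V) = k" using assms by blast
qed

lemma ld_weight_less_if_nbhd_psubset:
  assumes f: "ld_labeling V E f" and xy: "nbhd V E x \<subset> nbhd V E y"
  shows "ld_weight V E f x < ld_weight V E f y"
proof -
  obtain z where z: "z \<in> nbhd V E y" "z \<notin> nbhd V E x" using xy by blast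
  have "finite (nbhd V E y)"
    using ld_labeling_finite[OF f] unfolding nbhd_def by simp
  moreover have "0 < f z" using ld_labeling_pos[OF f] z(1) unfolding nbhd_def by blast
  ultimately show ?thesis
    unfolding ld_weight_def using xy z by (intro sum_strict_mono2) auto
qed

lemma three_ld_weights_if_nbhd_psubset:
  assumes f: "ld_labeling V E f" and "x \<in> V" "y \<in> V"
    and xy: "nbhd V E x \<subset> nbhd V E y"
  shows "3 \<le> card (ld_weight V E f ` V)"
proof -
  let ?w = "ld_weight V E f"
  obtain u where "u \<in> nbhd V E x" using f \<open>x \<in> V\<close> unfolding ld_labeling_def by blast
  then have "u \<in> V" "E x u" "E y u" using xy unfolding nbhd_def by auto
  then have "?w x \<noteq> ?w u" "?w y \<noteq> ?w u"
    using f \<open>x \<in> V\<close> \<open>y \<in> V\<close> unfolding ld_labeling_def by blast+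
  moreover have "?w x \<noteq> ?w y" using ld_weight_less_if_nbhd_psubset[OF f xy] by simp
  ultimately have "3 = card {?w x, ?w y, ?w u}" by simp
  also have "\<dots> \<le> card (?w ` V)"
    using ld_labeling_finite[OF f] \<open>x \<in> V\<close> \<open>y \<in> V\<close> \<open>u \<in> V\<close> by (intro card_mono) auto
  finally show ?thesis .
qed

lemma chi_ld_ge_3_if_nbhd_psubset:
  assumes "\<exists>f. ld_labeling V E f" and "x \<in> V" "y \<in> V"
    and "nbhd V E x \<subset> nbhd V E y"
  shows "3 \<le> chi_ld V E"
proof -
  obtain f where f: "ld_labeling V E f" and "card (ld_weight V E f ` V) = chi_ld V E"
    using chi_ld_attained[OF assms(1)] by blast
  with three_ld_weights_if_nbhd_psubset[OF f assms(2-4)] show ?thesis by simp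
qed

lemma nbhd_lex_edgeless:
  assumes "\<And>u v. \<not> EH u v"
  shows "nbhd (lex_verts VG VH) (lex_edge EG EH) (g, h) = nbhd VG EG g \<times> VH"
  using assms unfolding nbhd_def lex_verts_def lex_edge_def by auto

theorem mainTheorem8:
  fixes V :: "'a set" and E :: "'a \<Rightarrow> 'a \<Rightarrow> bool" and A B :: "'a set"
    and x y :: 'a and n :: nat
  assumes "n \<ge> 1"
    and "simple_graph V E"
    and "bipartite_with V E A B"
    and "x \<in> A" and "y \<in> A"
    and "nbhd V E x \<subset> nbhd V E y"
    and "\<exists>f. ld_labeling (lex_verts V (edgeless_verts n)) (lex_edge E edgeless_edge) f"
  shows "chi_ld (lex_verts V (edgeless_verts n)) (lex_edge E edgeless_edge) \<ge> 3"
proof (rule chi_ld_ge_3_if_nbhd_psubset[OF assms(7)])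
  have one: "1 \<in> edgeless_verts n" using assms(1) unfolding edgeless_verts_def by simp
  moreover have "x \<in> V" "y \<in> V" using assms(3-5) unfolding bipartite_with_def by auto
  ultimately show "(x, 1) \<in> lex_verts V (edgeless_verts n)" "(y, 1) \<in> lex_verts V (edgeless_verts n)"
    unfolding lex_verts_def by auto
  have "\<And>g i. nbhd (lex_verts V (edgeless_verts n)) (lex_edge E edgeless_edge) (g, i)
      = nbhd V E g \<times> edgeless_verts n"
    by (rule nbhd_lex_edgeless) (simp add: edgeless_edge_def)
  then show "nbhd (lex_verts V (edgeless_verts n)) (lex_edge E edgeless_edge) (x, 1)
      \<subset> nbhd (lex_verts V (edgeless_verts n)) (lex_edge E edgeless_edge) (y, 1)"
    using assms(6) one by (simp add: less_le_not_le Times_subset_cancel2)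
qed

end
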